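(* Let $A$ be a metabelian Lie $U$-algebra over a field $k$ and let $x,y,z\in A$. Then (1) if $xyx=0$ and $xyy=0$, then $xy=0$; (2) if $xy=0$, $xz=0$ and $x\neq0$, then $yz=0$.
   Context: Products are left-normed: $xy=x\circ y$, $xyz=(x\circ y)\circ z$. A Lie algebra is metabelian if $(a\circ b)\circ(c\circ d)=0$ identically; $\mathrm{Fit}(A)$ is the ideal generated by all elements lying in nilpotent ideals of $A$. If $\mathrm{Fit}(A)$ is abelian, choose $\{a_\alpha:\alpha\in\Lambda\}\subseteq A$ whose images form a basis of $A/\mathrm{Fit}(A)$, let $R=k[x_\alpha:\alpha\in\Lambda]$, and make $\mathrm{Fit}(A)$ an $R$-module via $b\cdot x_\alpha=b\circ a_\alpha$ (extended multiplicatively and linearly). $A$ is a $U$-algebra if $\mathrm{Fit}(A)$ is abelian and a torsion-free $R$-module. *)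

theory Defs
  imports Complex_Main "HOL-Library.Multiset"
begin

text \<open>A Lie algebra over the field 'k: the vector space (UNIV :: 'v set) with scalar
  multiplication sc, and a bilinear alternating bracket br satisfying Jacobi.
  br x y is the product written x y (x \<circ> y) in the paper.\<close>

definition lie_algebra :: "('k::field \<Rightarrow> 'v::ab_group_add \<Rightarrow> 'v) \<Rightarrow> ('v \<Rightarrow> 'v \<Rightarrow> 'v) \<Rightarrow> bool" where
  "lie_algebra sc br \<longleftrightarrow> Vector_Spaces.vector_space sc
     \<and> (\<forall>x y z. br (x + y) z = br x z + br y z)
     \<and> (\<forall>x y z. br x (y + z) = br x y + br x z)
     \<and> (\<forall>c x y. br (sc c x) y = sc c (br x y))
     \<and> (\<forall>c x y. br x (sc c y) = sc c (br x y))
     \<and> (\<forall>x. br x x = 0)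
     \<and> (\<forall>x y z. br (br x y) z + br (br y z) x + br (br z x) y = 0)"

definition metabelian :: "('v::zero \<Rightarrow> 'v \<Rightarrow> 'v) \<Rightarrow> bool" where
  "metabelian br \<longleftrightarrow> (\<forall>a b c d. br (br a b) (br c d) = 0)"

definition lie_ideal :: "('k::field \<Rightarrow> 'v::ab_group_add \<Rightarrow> 'v) \<Rightarrow> ('v \<Rightarrow> 'v \<Rightarrow> 'v) \<Rightarrow> 'v set \<Rightarrow> bool" where
  "lie_ideal sc br I \<longleftrightarrow> module.subspace sc I \<and> (\<forall>x\<in>I. \<forall>y. br x y \<in> I)"

text \<open>An ideal I is nilpotent iff for some n all left-normed products
  x y1 ... yn of n+1 elements of I vanish (i.e. I^(n+1) = 0).\<close>
definition nilpotent_ideal :: "('k::field \<Rightarrow> 'v::ab_group_add \<Rightarrow> 'v) \<Rightarrow> ('v \<Rightarrow> 'v \<Rightarrow> 'v) \<Rightarrow> 'v set \<Rightarrow> bool" where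
  "nilpotent_ideal sc br I \<longleftrightarrow> lie_ideal sc br I \<and>
     (\<exists>n. \<forall>x\<in>I. \<forall>ys. set ys \<subseteq> I \<and> length ys = n \<longrightarrow> foldl br x ys = 0)"

definition fitting :: "('k::field \<Rightarrow> 'v::ab_group_add \<Rightarrow> 'v) \<Rightarrow> ('v \<Rightarrow> 'v \<Rightarrow> 'v) \<Rightarrow> 'v set" where
  "fitting sc br = \<Inter>{J. lie_ideal sc br J \<and> \<Union>{I. nilpotent_ideal sc br I} \<subseteq> J}"

text \<open>B is a set of representatives whose images form a basis of A/Fit(A).\<close>
definition quotient_basis :: "('k::field \<Rightarrow> 'v::ab_group_add \<Rightarrow> 'v) \<Rightarrow> 'v set \<Rightarrow> 'v set \<Rightarrow> bool" where
  "quotient_basis sc F B \<longleftrightarrow>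
     (\<forall>S c. finite S \<and> S \<subseteq> B \<and> (\<Sum>b\<in>S. sc (c b) b) \<in> F \<longrightarrow> (\<forall>b\<in>S. c b = 0))
   \<and> (\<forall>v. \<exists>S c f. finite S \<and> S \<subseteq> B \<and> f \<in> F \<and> v = (\<Sum>b\<in>S. sc (c b) b) + f)"

text \<open>Polynomials in R = k[x_b : b \<in> B]: finitely supported coefficient functions on
  monomials, a monomial being a finite multiset of variables from B.
  The action of a monomial on v: v \<cdot> x_b = br v b, applied for each variable.\<close>
definition poly_R :: "'v set \<Rightarrow> ('v multiset \<Rightarrow> 'k::field) \<Rightarrow> bool" where
  "poly_R B p \<longleftrightarrow> finite {m. p m \<noteq> 0} \<and> (\<forall>m. p m \<noteq> 0 \<longrightarrow> set_mset m \<subseteq> B)"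

definition mono_act :: "('v \<Rightarrow> 'v \<Rightarrow> 'v) \<Rightarrow> 'v multiset \<Rightarrow> 'v \<Rightarrow> 'v" where
  "mono_act br m v = fold_mset (\<lambda>b w. br w b) v m"

definition poly_act :: "('k::field \<Rightarrow> 'v::ab_group_add \<Rightarrow> 'v) \<Rightarrow> ('v \<Rightarrow> 'v \<Rightarrow> 'v) \<Rightarrow> ('v multiset \<Rightarrow> 'k) \<Rightarrow> 'v \<Rightarrow> 'v" where
  "poly_act sc br p v = (\<Sum>m\<in>{m. p m \<noteq> 0}. sc (p m) (mono_act br m v))"

definition U_algebra :: "('k::field \<Rightarrow> 'v::ab_group_add \<Rightarrow> 'v) \<Rightarrow> ('v \<Rightarrow> 'v \<Rightarrow> 'v) \<Rightarrow> bool" where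
  "U_algebra sc br \<longleftrightarrow>
     (\<forall>x\<in>fitting sc br. \<forall>y\<in>fitting sc br. br x y = 0)
   \<and> (\<exists>B. quotient_basis sc (fitting sc br) B \<and>
        (\<forall>v\<in>fitting sc br. \<forall>p. poly_R B p \<and> p \<noteq> (\<lambda>_. 0) \<and> v \<noteq> 0 \<longrightarrow> poly_act sc br p v \<noteq> 0))"

end

theory Submission
  imports Defs
begin

text \<open>Metabelianity makes the derived algebra an abelian, hence nilpotent, ideal, so every
  product lies in Fit(A). If v \<in> Fit(A) is nonzero and vx = 0, write x = \<Sum> c(b) b + f with
  f \<in> Fit(A); as Fit(A) is abelian, 0 = vx is v acted on by the linear polynomial \<Sum> c(b) x(b),
  so torsion-freeness forces all c(b) = 0, i.e. x \<in> Fit(A). For (1) apply this with v = xy to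
  x and y, which puts x, y in the abelian Fit(A). For (2), Jacobi gives (yz)x = 0; if yz \<noteq> 0
  then x \<in> Fit(A), hence y, z \<in> Fit(A) and yz = 0.\<close>

definition linear_poly :: "'v set \<Rightarrow> ('v \<Rightarrow> 'k::comm_monoid_add) \<Rightarrow> 'v multiset \<Rightarrow> 'k" where
  "linear_poly S c m = (\<Sum>b\<in>S. if m = {#b#} then c b else 0)"

lemma linear_poly_singleton:
  assumes "finite S" and "b \<in> S"
  shows "linear_poly S c {#b#} = c b"
proof -
  have "linear_poly S c {#b#} = (\<Sum>b'\<in>S. if b' = b then c b' else 0)"
    unfolding linear_poly_def by (rule sum.cong) auto
  also have "\<dots> = c b" using assms by (simp add: sum.delta')
  finally show ?thesis .
qed

lemma linear_poly_support: "{m. linear_poly S c m \<noteq> 0} \<subseteq> (\<lambda>b. {#b#}) ` S"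
proof
  fix m assume "m \<in> {m. linear_poly S c m \<noteq> 0}"
  then have "(\<Sum>b\<in>S. if m = {#b#} then c b else 0) \<noteq> 0" by (simp add: linear_poly_def)
  then obtain b where "b \<in> S" "(if m = {#b#} then c b else 0) \<noteq> 0"
    by (rule sum.not_neutral_contains_not_neutral)
  then show "m \<in> (\<lambda>b. {#b#}) ` S" by (auto split: if_splits)
qed

lemma poly_R_linear_poly:
  assumes "finite S" and "S \<subseteq> B"
  shows "poly_R B (linear_poly S c)"
  unfolding poly_R_def
proof (intro conjI allI impI)
  show "finite {m. linear_poly S c m \<noteq> 0}"
    by (rule finite_subset[OF linear_poly_support]) (simp add: assms(1))
  fix m assume "linear_poly S c m \<noteq> 0"
  then obtain b where "b \<in> S" "m = {#b#}" using linear_poly_support by blast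
  then show "set_mset m \<subseteq> B" using assms(2) by auto
qed

lemma linear_poly_eq_0_iff:
  assumes "finite S"
  shows "linear_poly S c = (\<lambda>_. 0) \<longleftrightarrow> (\<forall>b\<in>S. c b = 0)"
proof
  assume "linear_poly S c = (\<lambda>_. 0)"
  then show "\<forall>b\<in>S. c b = 0" using linear_poly_singleton[OF assms] by metis
qed (auto simp: linear_poly_def fun_eq_iff intro!: sum.neutral)

locale lie_alg =
  fixes sc :: "'k::field \<Rightarrow> 'v::ab_group_add \<Rightarrow> 'v" and br :: "'v \<Rightarrow> 'v \<Rightarrow> 'v"
  assumes lie: "lie_algebra sc br"
begin

sublocale vector_space sc
  using lie by (simp add: lie_algebra_def)

lemma br_add_left: "br (x + y) z = br x z + br y z"
  and br_add_right: "br x (y + z) = br x y + br x z"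
  and br_scale_left: "br (sc c x) y = sc c (br x y)"
  and br_scale_right: "br x (sc c y) = sc c (br x y)"
  and br_self: "br x x = 0"
  and jacobi: "br (br x y) z + br (br y z) x + br (br z x) y = 0"
  using lie by (simp_all add: lie_algebra_def)

lemma br_zero_left [simp]: "br 0 x = 0"
  using br_add_left[of 0 0 x] by simp

lemma br_zero_right [simp]: "br x 0 = 0"
  using br_add_right[of x 0 0] by simp

lemma br_anticomm: "br x y = - br y x"
proof -
  have "0 = br (x + y) (x + y)" by (rule br_self[symmetric])
  also have "\<dots> = br x y + br y x"
    unfolding br_add_left br_add_right by (simp add: br_self)
  finally have "br x y + br y x = 0" by (rule sym)
  then show ?thesis by (simp add: eq_neg_iff_add_eq_0)
qed

lemma br_sum_right: "finite S \<Longrightarrow> br v (\<Sum>b\<in>S. g b) = (\<Sum>b\<in>S. br v (g b))"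
  by (induction S rule: finite_induct) (simp_all add: br_add_right)

lemma subspace_right_annihilator: "subspace {u. \<forall>w\<in>W. br w u = 0}"
  by (simp add: subspace_def br_add_right br_scale_right)

lemma subspace_left_annihilator: "subspace {u. \<forall>w\<in>W. br u w = 0}"
  by (simp add: subspace_def br_add_left br_scale_left)

definition derived_algebra :: "'v set" where
  "derived_algebra = span {br a b | a b. True}"

lemma derived_algebra_ideal: "lie_ideal sc br derived_algebra"
  unfolding lie_ideal_def derived_algebra_def by (auto intro: span_base)

lemma metabelian_derived_algebra_abelian:
  assumes "metabelian br" and "u \<in> derived_algebra" and "w \<in> derived_algebra"
  shows "br u w = 0"
proof -
  let ?D = "{br a b | a b. True}"
  have "derived_algebra \<subseteq> {u. \<forall>w\<in>?D. br u w = 0}"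
    unfolding derived_algebra_def
    by (rule span_minimal[OF _ subspace_left_annihilator]) (use assms(1) in \<open>auto simp: metabelian_def\<close>)
  then have "?D \<subseteq> {w. \<forall>u\<in>derived_algebra. br u w = 0}" by blast
  from span_minimal[OF this subspace_right_annihilator]
  have "derived_algebra \<subseteq> {w. \<forall>u\<in>derived_algebra. br u w = 0}"
    by (simp only: derived_algebra_def)
  with assms(2,3) show ?thesis by blast
qed

lemma metabelian_derived_algebra_nilpotent:
  assumes "metabelian br"
  shows "nilpotent_ideal sc br derived_algebra"
  unfolding nilpotent_ideal_def
proof (intro conjI derived_algebra_ideal exI[of _ 1] ballI allI impI)
  fix u ys assume "u \<in> derived_algebra" "set ys \<subseteq> derived_algebra \<and> length ys = 1"
  then show "foldl br u ys = 0"
    using metabelian_derived_algebra_abelian[OF assms] by (cases ys) auto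
qed

lemma metabelian_br_in_fitting:
  assumes "metabelian br"
  shows "br x y \<in> fitting sc br"
proof -
  have "br x y \<in> derived_algebra"
    unfolding derived_algebra_def by (rule span_base) auto
  with metabelian_derived_algebra_nilpotent[OF assms] show ?thesis
    unfolding fitting_def by blast
qed

lemma poly_act_linear_poly:
  assumes "finite S"
  shows "poly_act sc br (linear_poly S c) v = (\<Sum>b\<in>S. sc (c b) (br v b))"
proof -
  have "poly_act sc br (linear_poly S c) v
      = (\<Sum>m\<in>(\<lambda>b. {#b#}) ` S. sc (linear_poly S c m) (mono_act br m v))"
    unfolding poly_act_def
    by (rule sum.mono_neutral_left) (use linear_poly_support assms in auto)
  also have "\<dots> = (\<Sum>b\<in>S. sc (linear_poly S c {#b#}) (mono_act br {#b#} v))"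
    by (subst sum.reindex) (auto simp: inj_on_def)
  also have "\<dots> = (\<Sum>b\<in>S. sc (c b) (br v b))"
    by (rule sum.cong) (simp_all add: linear_poly_singleton[OF assms] mono_act_def)
  finally show ?thesis .
qed

lemma U_algebra_annihilated_in_fitting:
  assumes U: "U_algebra sc br" and v: "v \<in> fitting sc br" "v \<noteq> 0" and vx: "br v x = 0"
  shows "x \<in> fitting sc br"
proof -
  let ?F = "fitting sc br"
  have F_abelian: "\<forall>u\<in>?F. \<forall>w\<in>?F. br u w = 0" using U by (simp add: U_algebra_def)
  obtain B where qb: "quotient_basis sc ?F B"
    and torsion_free: "\<forall>v\<in>?F. \<forall>p. poly_R B p \<and> p \<noteq> (\<lambda>_. 0) \<and> v \<noteq> 0 \<longrightarrow> poly_act sc br p v \<noteq> 0"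
    using U by (auto simp: U_algebra_def)
  from qb have "\<forall>v. \<exists>S c f. finite S \<and> S \<subseteq> B \<and> f \<in> ?F \<and> v = (\<Sum>b\<in>S. sc (c b) b) + f"
    by (simp add: quotient_basis_def)
  then have "\<exists>S c f. finite S \<and> S \<subseteq> B \<and> f \<in> ?F \<and> x = (\<Sum>b\<in>S. sc (c b) b) + f"
    by (rule spec)
  then obtain S c f where S: "finite S" "S \<subseteq> B" and f: "f \<in> ?F"
    and x_eq: "x = (\<Sum>b\<in>S. sc (c b) b) + f"
    by blast
  have "poly_act sc br (linear_poly S c) v = br v x"
    using x_eq F_abelian v f
    by (simp add: poly_act_linear_poly[OF S(1)] br_add_right br_sum_right[OF S(1)] br_scale_right)
  with vx have "poly_act sc br (linear_poly S c) v = 0" by simp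
  then have "linear_poly S c = (\<lambda>_. 0)"
    using torsion_free v poly_R_linear_poly[OF S] by blast
  then have "\<forall>b\<in>S. c b = 0" using linear_poly_eq_0_iff[OF S(1)] by blast
  with x_eq f show ?thesis by simp
qed

lemma U_algebra_br_eq_0_if_annihilated:
  assumes "metabelian br" and "U_algebra sc br"
    and "br (br x y) x = 0" and "br (br x y) y = 0"
  shows "br x y = 0"
proof (rule ccontr)
  assume ne: "br x y \<noteq> 0"
  note xy_in_F = metabelian_br_in_fitting[OF assms(1)]
  have "x \<in> fitting sc br" "y \<in> fitting sc br"
    using U_algebra_annihilated_in_fitting[OF assms(2) xy_in_F ne] assms(3,4) by blast+
  with assms(2) ne show False by (simp add: U_algebra_def)
qed

lemma U_algebra_br_eq_0_if_common_annihilator: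
  assumes "metabelian br" and "U_algebra sc br"
    and "br x y = 0" and "br x z = 0" and "x \<noteq> 0"
  shows "br y z = 0"
proof (rule ccontr)
  assume ne: "br y z \<noteq> 0"
  note yz_in_F = metabelian_br_in_fitting[OF assms(1)]
  have "br (br y z) x = 0"
    using jacobi[of y z x] br_anticomm[of z x] br_anticomm[of y x] assms(3,4) by simp
  then have "x \<in> fitting sc br"
    by (rule U_algebra_annihilated_in_fitting[OF assms(2) yz_in_F ne])
  then have "y \<in> fitting sc br" "z \<in> fitting sc br"
    using U_algebra_annihilated_in_fitting[OF assms(2) _ assms(5)] assms(3,4) by blast+
  with assms(2) ne show False by (simp add: U_algebra_def)
qed

end

theorem theorem3p2p4:
  fixes sc :: "'k::field \<Rightarrow> 'v::ab_group_add \<Rightarrow> 'v" and br :: "'v \<Rightarrow> 'v \<Rightarrow> 'v"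
  assumes "lie_algebra sc br" and "metabelian br" and "U_algebra sc br"
  shows "(\<forall>x y. br (br x y) x = 0 \<and> br (br x y) y = 0 \<longrightarrow> br x y = 0)
       \<and> (\<forall>x y z. br x y = 0 \<and> br x z = 0 \<and> x \<noteq> 0 \<longrightarrow> br y z = 0)"
proof -
  interpret lie_alg sc br by (rule lie_alg.intro) (rule assms(1))
  show ?thesis
    by (auto intro: U_algebra_br_eq_0_if_annihilated[OF assms(2,3)]
        U_algebra_br_eq_0_if_common_annihilator[OF assms(2,3)])
qed

end
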